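(* Let $0\le z<x$ and define $h(y)=\operatorname{BP}(x,y)+\operatorname{BP}(y,z)$ for $y\in(z,x)$. Call a pair $(u,v)$ good if $v\ge cu$ and bad if $v<cu$. At every $y\in(z,x)$ with $y\ne cx$ and $z\ne cy$, $h$ is differentiable, and: (i) if $(x,y)$ and $(y,z)$ are both good, then $h'(y)>0$ when $y<\frac{x+z}{2}$ and $h'(y)<0$ when $y>\frac{x+z}2$; (ii) if $(x,y)$ is good and $(y,z)$ is bad, then $h'(y)>0$ when $y<\frac{x}{2-c}$ and $h'(y)<0$ when $y>\frac x{2-c}$; (iii) if $(x,y)$ is bad (whether $(y,z)$ is good or bad), then $h'(y)>0$.
   Context: Let $c=e^{2\pi}/1728$. For $x\ge y\ge0$ define (with the convention $0\log0=0$) \[f(x,y)=(x-y)\log(1728(1-c))+x\log x-y\log y-(x-y)\log(x-y),\qquad g(x,y)=x\log1728-2\pi y,\] and $\operatorname{BP}(x,y)=f(x,y)$ if $y\ge cx$, $\operatorname{BP}(x,y)=g(x,y)$ if $y<cx$. This is continuous on $\{(x,y):x\ge y\ge0\}$. *)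

theory Defs
  imports "HOL-Analysis.Analysis"
begin

definition bp_c :: real where
  "bp_c = exp (2 * pi) / 1728"

definition xlogx :: "real \<Rightarrow> real" where
  "xlogx t = (if t = 0 then 0 else t * ln t)"

definition bp_f :: "real \<Rightarrow> real \<Rightarrow> real" where
  "bp_f x y = (x - y) * ln (1728 * (1 - bp_c)) + xlogx x - xlogx y - xlogx (x - y)"

definition bp_g :: "real \<Rightarrow> real \<Rightarrow> real" where
  "bp_g x y = x * ln 1728 - 2 * pi * y"

definition BP :: "real \<Rightarrow> real \<Rightarrow> real" where
  "BP x y = (if y \<ge> bp_c * x then bp_f x y else bp_g x y)"

end

theory Submission
  imports Defs
begin

text \<open>
  Off the break lines \<open>y = c x\<close> and \<open>z = c y\<close> each summand of \<open>h\<close> is locally one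
  of the smooth branches \<open>f\<close> or \<open>g\<close>. With \<open>L = log (1728 (1 - c))\<close>, the derivative of
  \<open>BP x\<close> is \<open>log (x - y) - log y - L\<close> on a good pair and \<open>-2\<pi>\<close> on a bad one, and that
  of \<open>BP \<cdot> z\<close> is \<open>L + log y - log (y - z)\<close> resp. \<open>log 1728\<close>. So \<open>h'(y)\<close> is
  \<open>log (x - y) - log (y - z)\<close> in case (i) and \<open>log (x - y) - log ((1 - c) y)\<close> in case (ii),
  whose signs are those of \<open>x + z - 2y\<close> and \<open>x - (2 - c) y\<close>. In case (iii) positivity
  comes down to \<open>L > 2\<pi>\<close>, i.e. to \<open>e\<^sup>2\<^sup>\<pi> < 864\<close>, equivalently \<open>c < 1/2\<close>.
\<close>

lemma exp_two_pi_less_864: "exp (2 * pi) < 864"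
proof -
  have "exp (2 * pi) ^ 2 = exp (4 * pi)"
    by (simp flip: exp_of_nat_mult)
  also have "\<dots> < exp 13"
    using pi_approx(2) by simp
  also have "\<dots> = exp 1 ^ 13"
    using exp_of_nat_mult[of 13 "1::real"] by simp
  also have "\<dots> < (272 / 100) ^ 13"
    using e_less_272 by (intro power_strict_mono) auto
  also have "\<dots> < (864::real) ^ 2"
    by (simp add: power_divide divide_less_eq)
  finally show ?thesis
    by (rule power2_less_imp_less) simp
qed

lemma bp_c_pos: "0 < bp_c"
  unfolding bp_c_def by simp

lemma bp_c_less_half: "bp_c < 1 / 2"
  unfolding bp_c_def using exp_two_pi_less_864 by simp

lemma two_pi_less_ln_1728_one_minus_bp_c: "2 * pi < ln (1728 * (1 - bp_c))"
proof -
  have "exp (2 * pi) < 1728 * (1 - bp_c)"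
    unfolding bp_c_def using exp_two_pi_less_864 by simp
  then have "ln (exp (2 * pi)) < ln (1728 * (1 - bp_c))"
    using bp_c_less_half by (subst ln_less_cancel_iff) auto
  then show ?thesis
    by simp
qed

lemma ln_1728_one_minus_bp_c: "ln (1728 * (1 - bp_c)) = ln 1728 + ln (1 - bp_c)"
  using bp_c_less_half by (subst ln_mult) auto

lemma less_divide_two_minus_bp_c_iff: "y < x / (2 - bp_c) \<longleftrightarrow> (1 - bp_c) * y < x - y"
  using bp_c_less_half by (auto simp: field_simps)

lemma divide_two_minus_bp_c_less_iff: "x / (2 - bp_c) < y \<longleftrightarrow> x - y < (1 - bp_c) * y"
  using bp_c_less_half by (auto simp: field_simps)

lemma has_real_derivative_xlogx: "0 < t \<Longrightarrow> (xlogx has_real_derivative ln t + 1) (at t)"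
  by (rule has_field_derivative_transform_within_open[where f = "\<lambda>s. s * ln s" and S = "{0<..}"])
     (auto intro!: derivative_eq_intros simp: xlogx_def)

lemma has_real_derivative_xlogx_compose [derivative_intros]:
  assumes "0 < f x" "(f has_real_derivative f') (at x within S)"
  shows "((\<lambda>t. xlogx (f t)) has_real_derivative (ln (f x) + 1) * f') (at x within S)"
  using has_real_derivative_xlogx[OF assms(1)] assms(2) by (rule DERIV_chain2)

lemma has_real_derivative_bp_f_snd:
  assumes "0 < y" "y < x"
  shows "(bp_f x has_real_derivative ln (x - y) - ln y - ln (1728 * (1 - bp_c))) (at y)"
  unfolding bp_f_def using assms by (auto intro!: derivative_eq_intros simp: algebra_simps)

lemma has_real_derivative_bp_f_fst:
  assumes "0 < y" "z < y"
  shows "((\<lambda>t. bp_f t z) has_real_derivative ln (1728 * (1 - bp_c)) + ln y - ln (y - z)) (at y)"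
  unfolding bp_f_def using assms by (auto intro!: derivative_eq_intros simp: algebra_simps)

lemma has_real_derivative_BP_snd_f:
  assumes "0 < y" "bp_c * x < y" "y < x"
  shows "(BP x has_real_derivative ln (x - y) - ln y - ln (1728 * (1 - bp_c))) (at y)"
proof (rule has_field_derivative_transform_within_open[where S = "{bp_c * x <..}"])
  show "(bp_f x has_real_derivative ln (x - y) - ln y - ln (1728 * (1 - bp_c))) (at y)"
    using assms(1,3) by (rule has_real_derivative_bp_f_snd)
qed (use assms in \<open>auto simp: BP_def\<close>)

lemma has_real_derivative_BP_snd_g:
  assumes "y < bp_c * x"
  shows "(BP x has_real_derivative - 2 * pi) (at y)"
proof (rule has_field_derivative_transform_within_open[where S = "{..< bp_c * x}"])
  show "(bp_g x has_real_derivative - 2 * pi) (at y)"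
    unfolding bp_g_def by (auto intro!: derivative_eq_intros)
qed (use assms in \<open>auto simp: BP_def\<close>)

lemma has_real_derivative_BP_fst_f:
  assumes "0 < y" "z < y" "bp_c * y < z"
  shows "((\<lambda>t. BP t z) has_real_derivative ln (1728 * (1 - bp_c)) + ln y - ln (y - z)) (at y)"
proof (rule has_field_derivative_transform_within_open[where S = "{..< z / bp_c}"])
  show "((\<lambda>t. bp_f t z) has_real_derivative ln (1728 * (1 - bp_c)) + ln y - ln (y - z)) (at y)"
    using assms(1,2) by (rule has_real_derivative_bp_f_fst)
qed (use assms bp_c_pos in \<open>auto simp: BP_def field_simps\<close>)

lemma has_real_derivative_BP_fst_g:
  assumes "z < bp_c * y"
  shows "((\<lambda>t. BP t z) has_real_derivative ln 1728) (at y)"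
proof (rule has_field_derivative_transform_within_open[where S = "{z / bp_c <..}"])
  show "((\<lambda>t. bp_g t z) has_real_derivative ln 1728) (at y)"
    unfolding bp_g_def by (auto intro!: derivative_eq_intros)
qed (use assms bp_c_pos in \<open>auto simp: BP_def field_simps\<close>)

lemma has_real_derivative_BP_sum_good_good:
  assumes "0 < y" "z < y" "y < x" "bp_c * x < y" "bp_c * y < z"
  shows "((\<lambda>t. BP x t + BP t z) has_real_derivative ln (x - y) - ln (y - z)) (at y)"
  using DERIV_add[OF has_real_derivative_BP_snd_f[OF assms(1,4,3)]
      has_real_derivative_BP_fst_f[OF assms(1,2,5)]]
  by simp

lemma has_real_derivative_BP_sum_good_bad:
  assumes "0 < y" "y < x" "bp_c * x < y" "z < bp_c * y"
  shows "((\<lambda>t. BP x t + BP t z) has_real_derivative ln (x - y) - ln ((1 - bp_c) * y)) (at y)"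
proof -
  have "ln ((1 - bp_c) * y) = ln (1 - bp_c) + ln y"
    using bp_c_less_half assms(1) by (subst ln_mult) auto
  then show ?thesis
    using DERIV_add[OF has_real_derivative_BP_snd_f[OF assms(1,3,2)]
        has_real_derivative_BP_fst_g[OF assms(4)]]
    unfolding ln_1728_one_minus_bp_c by (simp add: algebra_simps)
qed

lemma has_real_derivative_BP_sum_bad:
  assumes "0 \<le> z" "z < y" "y < bp_c * x" "z \<noteq> bp_c * y"
  obtains D where "((\<lambda>t. BP x t + BP t z) has_real_derivative D) (at y)" "0 < D"
proof (cases "z < bp_c * y")
  case True
  have "ln (1 - bp_c) < 0"
    using bp_c_pos bp_c_less_half by simp
  then have "2 * pi < ln 1728"
    using two_pi_less_ln_1728_one_minus_bp_c unfolding ln_1728_one_minus_bp_c by simp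
  then show ?thesis
    using that DERIV_add[OF has_real_derivative_BP_snd_g[OF assms(3)]
        has_real_derivative_BP_fst_g[OF True]]
    by simp
next
  case False
  then have "bp_c * y < z"
    using assms(4) by simp
  have "0 < y"
    using assms(1,2) by simp
  then have "ln (y - z) \<le> ln y"
    using assms(1,2) by simp
  then show ?thesis
    using that DERIV_add[OF has_real_derivative_BP_snd_g[OF assms(3)]
        has_real_derivative_BP_fst_f[OF \<open>0 < y\<close> assms(2) \<open>bp_c * y < z\<close>]]
      two_pi_less_ln_1728_one_minus_bp_c
    by simp
qed

theorem mainTheorem14:
  fixes x y z :: real
  assumes "0 \<le> z" "z < x" "z < y" "y < x"
    and "y \<noteq> bp_c * x" "z \<noteq> bp_c * y"
  shows "(\<lambda>t. BP x t + BP t z) differentiable (at y)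
    \<and> ((y \<ge> bp_c * x \<and> z \<ge> bp_c * y) \<longrightarrow>
         (y < (x + z) / 2 \<longrightarrow> deriv (\<lambda>t. BP x t + BP t z) y > 0) \<and>
         (y > (x + z) / 2 \<longrightarrow> deriv (\<lambda>t. BP x t + BP t z) y < 0))
    \<and> ((y \<ge> bp_c * x \<and> z < bp_c * y) \<longrightarrow>
         (y < x / (2 - bp_c) \<longrightarrow> deriv (\<lambda>t. BP x t + BP t z) y > 0) \<and>
         (y > x / (2 - bp_c) \<longrightarrow> deriv (\<lambda>t. BP x t + BP t z) y < 0))
    \<and> (y < bp_c * x \<longrightarrow> deriv (\<lambda>t. BP x t + BP t z) y > 0)"
proof -
  let ?h = "\<lambda>t. BP x t + BP t z"
  have derivative: "?h differentiable (at y) \<and> deriv ?h y = D"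
    if "(?h has_real_derivative D) (at y)" for D
    using that by (auto simp: real_differentiable_def DERIV_imp_deriv)
  have "0 < y"
    using assms by simp
  consider (good_good) "bp_c * x < y" "bp_c * y < z" | (good_bad) "bp_c * x < y" "z < bp_c * y"
    | (bad) "y < bp_c * x"
    using assms(5,6) by fastforce
  then show ?thesis
  proof cases
    case good_good
    let ?D = "ln (x - y) - ln (y - z)"
    have "?h differentiable (at y)" "deriv ?h y = ?D"
      using derivative[OF has_real_derivative_BP_sum_good_good] good_good assms \<open>0 < y\<close> by auto
    moreover have "y < (x + z) / 2 \<Longrightarrow> 0 < ?D" "(x + z) / 2 < y \<Longrightarrow> ?D < 0"
      using assms by auto
    ultimately show ?thesis
      using good_good by auto
  next
    case good_bad
    let ?D = "ln (x - y) - ln ((1 - bp_c) * y)"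
    have "?h differentiable (at y)" "deriv ?h y = ?D"
      using derivative[OF has_real_derivative_BP_sum_good_bad] good_bad assms \<open>0 < y\<close> by auto
    moreover have "0 < (1 - bp_c) * y"
      using bp_c_less_half \<open>0 < y\<close> by simp
    ultimately show ?thesis
      using good_bad assms less_divide_two_minus_bp_c_iff divide_two_minus_bp_c_less_iff by auto
  next
    case bad
    then obtain D where "(?h has_real_derivative D) (at y)" "0 < D"
      using has_real_derivative_BP_sum_bad assms by blast
    then show ?thesis
      using derivative bad by auto
  qed
qed

end
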